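(* Let $G=(V,E)$ be a finite connected regular undirected unweighted graph with $n$ vertices, let $\lambda\in[0,1]$ and $S_0\subseteq V$. Then $\mathrm{fp}^{\lambda,1}_G(S_0)=|S_0|/n$, and for every $r>0$ the expected absorption time of the $\lambda$-mixed Moran process with fitness $r$ from $S_0$ is at most $C_r n^4$, where $C_r$ depends only on $r$ (i.e., it is $O_r(n^4)$).
   Context: The $\lambda$-mixed Moran process on a connected graph $G=(V,E)$ with $n=|V|\ge 2$: each vertex hosts a resident (fitness $1$) or mutant (fitness $r>0$); the state is the mutant set $S_t\subseteq V$. Each step, independently: with probability $\lambda$ a Birth-death step (a vertex $u$ chosen with probability proportional to fitness among all vertices; a uniformly random neighbor of $u$ takes $u$'s type); with probability $1-\lambda$ a death-Birth step (a uniformly random vertex $v$ dies; a neighbor $u$ of $v$ chosen with probability proportional to fitness among the neighbors of $v$; $v$ takes $u$'s type). $\mathrm{fp}^{\lambda,r}_G(S_0)$ is the probability of reaching $S_t=V$ from $S_0$; the absorption time is the expected number of steps until $S_t\in\{\emptyset,V\}$. *)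

theory Defs
  imports Complex_Main "HOL-Library.Extended_Nonnegative_Real"
begin

definition simple_graph :: "'a set \<Rightarrow> ('a \<Rightarrow> 'a \<Rightarrow> bool) \<Rightarrow> bool" where
  "simple_graph V E \<longleftrightarrow> finite V \<and> (\<forall>x y. E x y \<longrightarrow> x \<in> V \<and> y \<in> V)
     \<and> (\<forall>x y. E x y \<longrightarrow> E y x) \<and> (\<forall>x. \<not> E x x)"

definition nbrs :: "'a set \<Rightarrow> ('a \<Rightarrow> 'a \<Rightarrow> bool) \<Rightarrow> 'a \<Rightarrow> 'a set" where
  "nbrs V E v = {u \<in> V. E v u}"

definition graph_connected :: "'a set \<Rightarrow> ('a \<Rightarrow> 'a \<Rightarrow> bool) \<Rightarrow> bool" where
  "graph_connected V E \<longleftrightarrow> (\<forall>u\<in>V. \<forall>v\<in>V. (\<lambda>x y. E x y \<and> x \<in> V \<and> y \<in> V)\<^sup>*\<^sup>* u v)"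

definition graph_regular :: "'a set \<Rightarrow> ('a \<Rightarrow> 'a \<Rightarrow> bool) \<Rightarrow> bool" where
  "graph_regular V E \<longleftrightarrow> (\<exists>d. \<forall>v\<in>V. card (nbrs V E v) = d)"

definition fit :: "real \<Rightarrow> 'a set \<Rightarrow> 'a \<Rightarrow> real" where
  "fit r S u = (if u \<in> S then r else 1)"

definition take_type :: "'a set \<Rightarrow> 'a \<Rightarrow> 'a \<Rightarrow> 'a set" where
  "take_type S u v = (if u \<in> S then insert v S else S - {v})"

definition moran_trans ::
  "'a set \<Rightarrow> ('a \<Rightarrow> 'a \<Rightarrow> bool) \<Rightarrow> real \<Rightarrow> real \<Rightarrow> 'a set \<Rightarrow> 'a set \<Rightarrow> real" where
  "moran_trans V E lam r S T =
     lam * (\<Sum>u\<in>V. \<Sum>v\<in>nbrs V E u.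
        fit r S u / (\<Sum>w\<in>V. fit r S w) * (1 / real (card (nbrs V E u)))
        * (if take_type S u v = T then 1 else 0))
   + (1 - lam) * (\<Sum>v\<in>V. \<Sum>u\<in>nbrs V E v.
        (1 / real (card V)) * (fit r S u / (\<Sum>w\<in>nbrs V E v. fit r S w))
        * (if take_type S u v = T then 1 else 0))"

text \<open>Distribution of S_t (as a function on states, supported on subsets of V).\<close>
fun moran_dist ::
  "'a set \<Rightarrow> ('a \<Rightarrow> 'a \<Rightarrow> bool) \<Rightarrow> real \<Rightarrow> real \<Rightarrow> 'a set \<Rightarrow> nat \<Rightarrow> 'a set \<Rightarrow> real" where
  "moran_dist V E lam r S0 0 T = (if T = S0 then 1 else 0)"
| "moran_dist V E lam r S0 (Suc t) T =
     (\<Sum>S\<in>Pow V. moran_dist V E lam r S0 t S * moran_trans V E lam r S T)"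

text \<open>Fixation probability: probability of eventually reaching S_t = V
  (V is absorbing, so this is the limit of Pr[S_t = V]).\<close>
definition fix_prob ::
  "'a set \<Rightarrow> ('a \<Rightarrow> 'a \<Rightarrow> bool) \<Rightarrow> real \<Rightarrow> real \<Rightarrow> 'a set \<Rightarrow> real" where
  "fix_prob V E lam r S0 = lim (\<lambda>t. moran_dist V E lam r S0 t V)"

text \<open>Expected absorption time: E[tau] = sum_{t>=0} Pr[tau > t]
  = sum_t Pr[S_t \<notin> {{}, V}] (both {} and V are absorbing); may be infinite.\<close>
definition absorption_time ::
  "'a set \<Rightarrow> ('a \<Rightarrow> 'a \<Rightarrow> bool) \<Rightarrow> real \<Rightarrow> real \<Rightarrow> 'a set \<Rightarrow> ennreal" where
  "absorption_time V E lam r S0 =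
     (\<Sum>t. ennreal (1 - moran_dist V E lam r S0 t {} - moran_dist V E lam r S0 t V))"

end

theory Submission
  imports Defs
begin

text \<open>On a d-regular graph both update rules change |S| by one along an arc between S and its
  complement, and comparing each rule with the neutral process (r = 1) shows that the drift of |S|
  has the sign of r - 1. For r = 1 it vanishes, so |S_t| is a martingale; absorption being
  certain, the fixation probability is |S_0|/n. As the potential stays in
  [0, n^2], the expected number of unabsorbed steps is at most max(r,1)/min(r,1) n^4.\<close>

lemma rtranclp_exits_set:
  assumes "R\<^sup>*\<^sup>* x y" "x \<in> S" "y \<notin> S"
  obtains u v where "R u v" "u \<in> S" "v \<notin> S"
  using assms by (induction rule: rtranclp_induct) auto

lemma sum_indicator_pushforward:
  fixes a :: "'x \<Rightarrow> real" and g :: "'t \<Rightarrow> real"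
  assumes "finite A" "finite X" "h ` X \<subseteq> A"
  shows "(\<Sum>T\<in>A. (\<Sum>x\<in>X. a x * (if h x = T then 1 else 0)) * g T) = (\<Sum>x\<in>X. a x * g (h x))"
proof -
  have "(\<Sum>T\<in>A. (\<Sum>x\<in>X. a x * (if h x = T then 1 else 0)) * g T)
      = (\<Sum>x\<in>X. \<Sum>T\<in>A. if h x = T then a x * g (h x) else 0)"
    by (subst sum.swap) (auto simp: sum_distrib_right intro!: sum.cong)
  also have "\<dots> = (\<Sum>x\<in>X. a x * g (h x))"
    using assms by (intro sum.cong) (auto simp: sum.delta)
  finally show ?thesis .
qed

lemma sum_le_of_potential_increments:
  fixes \<Phi> g :: "nat \<Rightarrow> real"
  assumes step: "\<And>t. \<Phi> t + c * g t \<le> \<Phi> (Suc t)"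
    and nonneg: "\<And>t. 0 \<le> \<Phi> t" and bounded: "\<And>t. \<Phi> t \<le> B" and "0 < c"
  shows "(\<Sum>t<k. g t) \<le> B / c"
proof -
  have "c * (\<Sum>t<k. g t) \<le> \<Phi> k - \<Phi> 0"
    by (induction k) (use step in \<open>auto simp: distrib_left intro: order.trans add_mono\<close>)
  then have "c * (\<Sum>t<k. g t) \<le> B"
    using nonneg[of 0] bounded[of k] by linarith
  then show ?thesis
    using \<open>0 < c\<close> by (simp add: pos_le_divide_eq mult.commute)
qed

lemma suminf_ennreal_le_of_partial_sums:
  fixes g :: "nat \<Rightarrow> real"
  assumes "\<And>t. 0 \<le> g t" "\<And>k. (\<Sum>t<k. g t) \<le> B"
  shows "summable g" "(\<Sum>t. ennreal (g t)) \<le> ennreal B"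
proof -
  show "summable g"
    using assms by (rule summableI_nonneg_bounded)
  then have "(\<Sum>t. ennreal (g t)) = ennreal (\<Sum>t. g t)"
    using assms(1) by (intro suminf_ennreal_eq summable_sums)
  also have "\<dots> \<le> ennreal B"
    using \<open>summable g\<close> assms(2) by (intro ennreal_leI suminf_le_const)
  finally show "(\<Sum>t. ennreal (g t)) \<le> ennreal B" .
qed

lemma fit_pos: "0 < r \<Longrightarrow> 0 < fit r S u"
  by (simp add: fit_def)

lemma fit_bounds: "min r 1 \<le> fit r S u" "fit r S u \<le> max r 1"
  by (auto simp: fit_def)

definition card_change :: "'a set \<Rightarrow> 'a \<Rightarrow> 'a \<Rightarrow> real" where
  "card_change S u v = of_bool (u \<in> S \<and> v \<notin> S) - of_bool (u \<notin> S \<and> v \<in> S)"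

lemma card_take_type:
  assumes "finite S"
  shows "real (card (take_type S u v)) = real (card S) + card_change S u v"
proof (cases "u \<in> S")
  case False
  moreover have "real (card (S - {v})) = real (card S) - 1" if "v \<in> S"
    using arg_cong[OF card_Suc_Diff1[OF assms that], of real] by simp
  ultimately show ?thesis
    by (simp add: take_type_def card_change_def)
qed (use assms in \<open>simp add: take_type_def card_change_def insert_absorb\<close>)

lemma card_change_swap: "card_change S v u = - card_change S u v"
  by (auto simp: card_change_def)

lemma fit_mult_card_change:
  "fit r S u * card_change S u v = card_change S u v + (r - 1) * of_bool (u \<in> S \<and> v \<notin> S)"
  by (auto simp: fit_def card_change_def)

lemma fit_mult_card_change_at_target:
  "v \<in> S \<Longrightarrow> fit r S u * card_change S u v = card_change S u v"
  "v \<notin> S \<Longrightarrow> fit r S u * card_change S u v = r * card_change S u v"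
  by (auto simp: fit_def card_change_def)

lemma card_change_sign:
  "v \<in> S \<Longrightarrow> card_change S u v \<le> 0"
  "v \<notin> S \<Longrightarrow> 0 \<le> card_change S u v"
  by (auto simp: card_change_def)

locale moran_process =
  fixes V :: "'a set" and E :: "'a \<Rightarrow> 'a \<Rightarrow> bool" and lam r :: real
  assumes simple: "simple_graph V E" and connected: "graph_connected V E"
    and two_vertices: "2 \<le> card V" and lam_nonneg: "0 \<le> lam" and lam_le_one: "lam \<le> 1"
    and r_pos: "0 < r"
begin

lemma finite_V: "finite V"
  and E_sym: "E u v \<Longrightarrow> E v u"
  and E_in_V: "E u v \<Longrightarrow> u \<in> V" "E u v \<Longrightarrow> v \<in> V"
  using simple by (auto simp: simple_graph_def)

lemma V_nonempty: "V \<noteq> {}"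
  using two_vertices by auto

lemma mem_nbrs_iff: "v \<in> nbrs V E u \<longleftrightarrow> E u v"
  by (auto simp: nbrs_def E_in_V)

lemma finite_nbrs: "finite (nbrs V E u)"
  using finite_V by (simp add: nbrs_def)

lemma card_nbrs_le: "card (nbrs V E u) \<le> card V"
  using finite_V by (auto simp: nbrs_def intro: card_mono)

lemma boundary_arc:
  assumes "S \<subseteq> V" "S \<noteq> {}" "S \<noteq> V"
  obtains u v where "u \<in> S" "v \<notin> S" "E u v"
proof -
  obtain x y where "x \<in> S" "y \<in> V - S"
    using assms by blast
  moreover from this have "(\<lambda>x y. E x y \<and> x \<in> V \<and> y \<in> V)\<^sup>*\<^sup>* x y"
    using connected assms(1) by (auto simp: graph_connected_def)
  ultimately show ?thesis
    using that by (auto elim: rtranclp_exits_set)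
qed

lemma card_nbrs_pos:
  assumes "u \<in> V"
  shows "0 < card (nbrs V E u)"
proof -
  have "{u} \<noteq> V"
    using two_vertices by auto
  then obtain u' v where "u' \<in> {u}" "E u' v"
    using assms by (auto intro: boundary_arc[of "{u}"])
  then show ?thesis
    using finite_nbrs by (auto simp: card_gt_0_iff mem_nbrs_iff)
qed

definition "arcs = {(u, v). E u v}"

lemma finite_arcs: "finite arcs"
  by (rule finite_subset[of _ "V \<times> V"]) (auto simp: arcs_def E_in_V finite_V)

lemma sum_arcs_by_source: "(\<Sum>(u, v)\<in>arcs. F u v) = (\<Sum>u\<in>V. \<Sum>v\<in>nbrs V E u. F u v)"
proof -
  have "arcs = Sigma V (nbrs V E)"
    by (auto simp: arcs_def mem_nbrs_iff E_in_V)
  then show ?thesis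
    using finite_V finite_nbrs by (simp add: sum.Sigma)
qed

lemma sum_arcs_swap: "(\<Sum>(u, v)\<in>arcs. F u v) = (\<Sum>(u, v)\<in>arcs. F v u)"
  by (rule sum.reindex_bij_witness[of _ prod.swap prod.swap]) (auto simp: arcs_def E_sym)

lemma sum_arcs_by_target: "(\<Sum>(u, v)\<in>arcs. F u v) = (\<Sum>v\<in>V. \<Sum>u\<in>nbrs V E v. F u v)"
  by (subst sum_arcs_swap) (rule sum_arcs_by_source)

lemma sum_arcs_antisym:
  fixes F :: "'a \<Rightarrow> 'a \<Rightarrow> real"
  assumes "\<And>u v. F v u = - F u v"
  shows "(\<Sum>(u, v)\<in>arcs. F u v) = 0"
proof -
  have "(\<Sum>(u, v)\<in>arcs. F u v) = (\<Sum>(u, v)\<in>arcs. F v u)"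
    by (rule sum_arcs_swap)
  also have "\<dots> = (\<Sum>(u, v)\<in>arcs. - F u v)"
    unfolding case_prod_unfold by (intro sum.cong refl) (rule assms)
  also have "\<dots> = - (\<Sum>(u, v)\<in>arcs. F u v)"
    by (simp add: case_prod_unfold sum_negf)
  finally show ?thesis
    by simp
qed

definition "total_fit S = (\<Sum>w\<in>V. fit r S w)"
definition "nbr_fit S v = (\<Sum>w\<in>nbrs V E v. fit r S w)"

lemma total_fit_pos: "0 < total_fit S"
  unfolding total_fit_def using finite_V V_nonempty r_pos by (intro sum_pos fit_pos)

lemma total_fit_le: "total_fit S \<le> real (card V) * max r 1"
  unfolding total_fit_def by (intro sum_bounded_above fit_bounds)

lemma nbr_fit_pos: "v \<in> V \<Longrightarrow> 0 < nbr_fit S v"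
  unfolding nbr_fit_def using finite_nbrs card_nbrs_pos[of v] r_pos
  by (intro sum_pos fit_pos) auto

lemma nbr_fit_bounds:
  "real (card (nbrs V E v)) * min r 1 \<le> nbr_fit S v"
  "nbr_fit S v \<le> real (card (nbrs V E v)) * max r 1"
  unfolding nbr_fit_def by (intro sum_bounded_below sum_bounded_above fit_bounds)+

text \<open>step_weight S u v is the probability that v takes the type of u in the next step: u
  reproduces onto v in a Birth-death step, or v dies and is replaced by u in a death-Birth step.\<close>
definition "bd_weight S u = fit r S u / (total_fit S * real (card (nbrs V E u)))"
definition "db_weight S u v = fit r S u / (real (card V) * nbr_fit S v)"
definition "step_weight S u v = lam * bd_weight S u + (1 - lam) * db_weight S u v"

lemma step_weight_nonneg: "0 \<le> step_weight S u v"
proof -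
  have "0 \<le> nbr_fit S v"
    unfolding nbr_fit_def using r_pos by (intro sum_nonneg less_imp_le fit_pos)
  then show ?thesis
    unfolding step_weight_def bd_weight_def db_weight_def
    using lam_nonneg lam_le_one r_pos total_fit_pos[of S]
    by (intro add_nonneg_nonneg mult_nonneg_nonneg divide_nonneg_nonneg) (auto intro: less_imp_le fit_pos)
qed

lemma sum_bd_weight: "(\<Sum>(u, v)\<in>arcs. bd_weight S u) = 1"
proof -
  have "(\<Sum>(u, v)\<in>arcs. bd_weight S u) = (\<Sum>u\<in>V. fit r S u / total_fit S)"
    unfolding sum_arcs_by_source bd_weight_def using card_nbrs_pos by (intro sum.cong) auto
  also have "\<dots> = 1"
    using total_fit_pos[of S] by (simp flip: sum_divide_distrib add: total_fit_def)
  finally show ?thesis .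
qed

lemma sum_db_weight: "(\<Sum>(u, v)\<in>arcs. db_weight S u v) = 1"
proof -
  have "(\<Sum>(u, v)\<in>arcs. db_weight S u v) = (\<Sum>v\<in>V. 1 / real (card V))"
    unfolding sum_arcs_by_target db_weight_def
  proof (intro sum.cong refl)
    fix v assume "v \<in> V"
    then show "(\<Sum>u\<in>nbrs V E v. fit r S u / (real (card V) * nbr_fit S v)) = 1 / real (card V)"
      using nbr_fit_pos[of v S] by (simp flip: sum_divide_distrib add: nbr_fit_def)
  qed
  also have "\<dots> = 1"
    using V_nonempty finite_V by simp
  finally show ?thesis .
qed

lemma sum_step_weight: "(\<Sum>(u, v)\<in>arcs. step_weight S u v) = 1"
  using sum_bd_weight[of S] sum_db_weight[of S]
  by (simp add: step_weight_def sum.distrib case_prod_unfold flip: sum_distrib_left)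

lemma moran_trans_eq_sum_arcs:
  "moran_trans V E lam r S T =
     (\<Sum>(u, v)\<in>arcs. step_weight S u v * (if take_type S u v = T then 1 else 0))"
proof -
  define I where "I u v = (if take_type S u v = T then 1 else (0::real))" for u v
  have "(\<Sum>(u, v)\<in>arcs. step_weight S u v * I u v)
      = lam * (\<Sum>(u, v)\<in>arcs. bd_weight S u * I u v) + (1 - lam) * (\<Sum>(u, v)\<in>arcs. db_weight S u v * I u v)"
    by (simp add: step_weight_def case_prod_unfold distrib_right sum.distrib sum_distrib_left mult.assoc)
  also have "\<dots> = moran_trans V E lam r S T"
    unfolding sum_arcs_by_source[of "\<lambda>u v. bd_weight S u * I u v"]
      sum_arcs_by_target[of "\<lambda>u v. db_weight S u v * I u v"]
    by (simp add: moran_trans_def bd_weight_def db_weight_def total_fit_def nbr_fit_def I_def)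
  finally show ?thesis
    by (simp add: I_def)
qed

definition "step_mean S g = (\<Sum>(u, v)\<in>arcs. step_weight S u v * g (take_type S u v))"

lemma sum_moran_trans:
  assumes "S \<subseteq> V"
  shows "(\<Sum>T\<in>Pow V. moran_trans V E lam r S T * g T) = step_mean S g"
  unfolding moran_trans_eq_sum_arcs step_mean_def case_prod_unfold
  using assms finite_V finite_arcs
  by (intro sum_indicator_pushforward[where a = "\<lambda>p. step_weight S (fst p) (snd p)"
        and h = "\<lambda>p. take_type S (fst p) (snd p)"])
    (auto simp: arcs_def take_type_def dest: E_in_V)

definition "min_weight = min r 1 / (max r 1 * real (card V) ^ 2)"

lemma min_weight_pos: "0 < min_weight"
  unfolding min_weight_def using r_pos two_vertices by simp

lemma min_weight_eq: "min_weight = min r 1 / (real (card V) * max r 1 * real (card V))"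
  by (simp add: min_weight_def power2_eq_square ac_simps)

lemma bd_weight_ge:
  assumes "u \<in> V"
  shows "min_weight \<le> bd_weight S u"
  unfolding min_weight_eq bd_weight_def
proof (rule frac_le)
  show "0 < total_fit S * real (card (nbrs V E u))"
    using total_fit_pos card_nbrs_pos[OF assms] by simp
  show "total_fit S * real (card (nbrs V E u)) \<le> real (card V) * max r 1 * real (card V)"
    using total_fit_le total_fit_pos[of S] card_nbrs_le[of u] by (intro mult_mono) auto
qed (use r_pos fit_bounds[of r S u] in auto)

lemma db_weight_ge:
  assumes "v \<in> V"
  shows "min_weight \<le> db_weight S u v"
  unfolding min_weight_eq db_weight_def
proof (rule frac_le)
  show "0 < real (card V) * nbr_fit S v"
    using nbr_fit_pos[OF assms] V_nonempty finite_V by (simp add: card_gt_0_iff)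
  have "nbr_fit S v \<le> real (card V) * max r 1"
    using nbr_fit_bounds(2)[of S v] card_nbrs_le[of v]
    by (meson max.cobounded2 mult_right_mono of_nat_le_iff order_trans zero_le_one)
  then show "real (card V) * nbr_fit S v \<le> real (card V) * max r 1 * real (card V)"
    by (simp add: mult_left_mono ac_simps)
qed (use r_pos fit_bounds[of r S u] in auto)

lemma step_weight_ge:
  assumes "E u v"
  shows "min_weight \<le> step_weight S u v"
proof -
  have "min_weight = lam * min_weight + (1 - lam) * min_weight"
    by (simp add: algebra_simps)
  also have "\<dots> \<le> step_weight S u v"
    unfolding step_weight_def using assms lam_nonneg lam_le_one
    by (intro add_mono mult_left_mono bd_weight_ge db_weight_ge) (auto dest: E_in_V)
  finally show ?thesis .
qed

definition "drift S = (\<Sum>(u, v)\<in>arcs. step_weight S u v * card_change S u v)"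

lemma drift_eq:
  "drift S = lam * (\<Sum>(u, v)\<in>arcs. bd_weight S u * card_change S u v)
     + (1 - lam) * (\<Sum>(u, v)\<in>arcs. db_weight S u v * card_change S u v)"
  by (simp add: drift_def step_weight_def case_prod_unfold distrib_right sum.distrib
      sum_distrib_left mult.assoc)

lemma step_mean_card:
  assumes "S \<subseteq> V"
  shows "step_mean S (\<lambda>T. real (card T)) = real (card S) + drift S"
proof -
  have "finite S"
    using assms finite_V finite_subset by blast
  then have "step_mean S (\<lambda>T. real (card T))
      = (\<Sum>(u, v)\<in>arcs. real (card S) * step_weight S u v + step_weight S u v * card_change S u v)"
    unfolding step_mean_def case_prod_unfold by (intro sum.cong refl) (simp add: card_take_type algebra_simps)
  also have "\<dots> = real (card S) + drift S"
    using sum_step_weight[of S]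
    by (simp add: drift_def case_prod_unfold sum.distrib flip: sum_distrib_left)
  finally show ?thesis .
qed

lemma sum_step_weight_card_change_sq:
  assumes "S \<subseteq> V" "S \<noteq> {}" "S \<noteq> V"
  shows "min_weight \<le> (\<Sum>(u, v)\<in>arcs. step_weight S u v * (card_change S u v)\<^sup>2)"
proof -
  obtain u v where "u \<in> S" "v \<notin> S" "E u v"
    using assms by (rule boundary_arc)
  then have "min_weight \<le> step_weight S u v * (card_change S u v)\<^sup>2"
    using step_weight_ge by (simp add: card_change_def)
  also have "\<dots> \<le> (\<Sum>(u, v)\<in>arcs. step_weight S u v * (card_change S u v)\<^sup>2)"
    using member_le_sum[of "(u, v)" arcs "\<lambda>(u, v). step_weight S u v * (card_change S u v)\<^sup>2"]
      \<open>E u v\<close> finite_arcs step_weight_nonneg by (auto simp: arcs_def)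
  finally show ?thesis .
qed

lemma moran_trans_nonneg: "0 \<le> moran_trans V E lam r S T"
  unfolding moran_trans_eq_sum_arcs case_prod_unfold
  by (intro sum_nonneg mult_nonneg_nonneg step_weight_nonneg) auto

lemma moran_dist_nonneg: "0 \<le> moran_dist V E lam r S0 t T"
  by (induction t arbitrary: T) (auto intro!: sum_nonneg mult_nonneg_nonneg moran_trans_nonneg)

context
  fixes S0 assumes initial: "S0 \<subseteq> V"
begin

definition "expect t g = (\<Sum>T\<in>Pow V. moran_dist V E lam r S0 t T * g T)"

lemma expect_0: "expect 0 g = g S0"
proof -
  have "expect 0 g = (\<Sum>T\<in>Pow V. if T = S0 then g T else 0)"
    unfolding expect_def by (intro sum.cong) auto
  then show ?thesis
    using initial finite_V by simp
qed

lemma expect_Suc: "expect (Suc t) g = expect t (\<lambda>S. step_mean S g)"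
proof -
  have "expect (Suc t) g
      = (\<Sum>S\<in>Pow V. moran_dist V E lam r S0 t S * (\<Sum>T\<in>Pow V. moran_trans V E lam r S T * g T))"
    unfolding expect_def moran_dist.simps sum_distrib_left sum_distrib_right mult.assoc
    by (rule sum.swap)
  also have "\<dots> = expect t (\<lambda>S. step_mean S g)"
    unfolding expect_def by (intro sum.cong refl) (simp add: sum_moran_trans)
  finally show ?thesis .
qed

lemma expect_mono: "(\<And>T. T \<subseteq> V \<Longrightarrow> g T \<le> h T) \<Longrightarrow> expect t g \<le> expect t h"
  unfolding expect_def by (intro sum_mono mult_left_mono moran_dist_nonneg) auto

lemma expect_nonneg: "(\<And>T. T \<subseteq> V \<Longrightarrow> 0 \<le> g T) \<Longrightarrow> 0 \<le> expect t g"
  unfolding expect_def by (intro sum_nonneg mult_nonneg_nonneg moran_dist_nonneg) auto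

lemma expect_cong: "(\<And>T. T \<subseteq> V \<Longrightarrow> g T = h T) \<Longrightarrow> expect t g = expect t h"
  by (intro order.antisym expect_mono) auto

lemma expect_add: "expect t (\<lambda>T. g T + h T) = expect t g + expect t h"
  by (simp add: expect_def distrib_left sum.distrib)

lemma expect_diff: "expect t (\<lambda>T. g T - h T) = expect t g - expect t h"
  by (simp add: expect_def right_diff_distrib sum_subtractf)

lemma expect_cmult: "expect t (\<lambda>T. c * g T) = c * expect t g"
  by (simp add: expect_def sum_distrib_left ac_simps)

lemma expect_const: "expect t (\<lambda>_. c) = c"
proof (induction t)
  case (Suc t)
  have "step_mean S (\<lambda>_. c) = c" for S
    using sum_step_weight[of S] by (simp add: step_mean_def case_prod_unfold flip: sum_distrib_right)
  then show ?case
    using Suc by (simp add: expect_Suc)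
qed (simp add: expect_0)

lemma expect_indicator: "A \<subseteq> V \<Longrightarrow> expect t (\<lambda>T. of_bool (T = A)) = moran_dist V E lam r S0 t A"
  using finite_V by (simp add: expect_def of_bool_def if_distrib cong: if_cong)

definition "prob_unabsorbed t = expect t (\<lambda>T. of_bool (T \<noteq> {} \<and> T \<noteq> V))"

lemma prob_unabsorbed_nonneg: "0 \<le> prob_unabsorbed t"
  unfolding prob_unabsorbed_def by (rule expect_nonneg) simp

lemma absorption_time_eq: "absorption_time V E lam r S0 = (\<Sum>t. ennreal (prob_unabsorbed t))"
proof -
  have "of_bool (T \<noteq> {} \<and> T \<noteq> V) = 1 - of_bool (T = {}) - (of_bool (T = V) :: real)" for T
    using V_nonempty by auto
  then have "prob_unabsorbed t
      = 1 - moran_dist V E lam r S0 t {} - moran_dist V E lam r S0 t V" for t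
    unfolding prob_unabsorbed_def by (simp add: expect_diff expect_const expect_indicator)
  then show ?thesis
    by (simp add: absorption_time_def)
qed

end

end

locale regular_moran_process = moran_process +
  fixes d :: nat
  assumes degree: "v \<in> V \<Longrightarrow> card (nbrs V E v) = d"
begin

lemma degree_pos: "0 < d"
  using V_nonempty card_nbrs_pos degree by blast

lemma sum_card_change: "(\<Sum>(u, v)\<in>arcs. card_change S u v) = 0"
  by (rule sum_arcs_antisym) (rule card_change_swap)

lemma bd_drift_eq:
  "(\<Sum>(u, v)\<in>arcs. bd_weight S u * card_change S u v)
     = (r - 1) * ((\<Sum>(u, v)\<in>arcs. of_bool (u \<in> S \<and> v \<notin> S)) / (total_fit S * real d))"
proof -
  have "(\<Sum>(u, v)\<in>arcs. bd_weight S u * card_change S u v)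
      = (\<Sum>(u, v)\<in>arcs. fit r S u * card_change S u v) / (total_fit S * real d)"
    unfolding sum_divide_distrib case_prod_unfold
    by (intro sum.cong refl) (auto simp: bd_weight_def arcs_def degree E_in_V)
  also have "(\<Sum>(u, v)\<in>arcs. fit r S u * card_change S u v)
      = (\<Sum>(u, v)\<in>arcs. card_change S u v) + (r - 1) * (\<Sum>(u, v)\<in>arcs. of_bool (u \<in> S \<and> v \<notin> S))"
    by (simp add: fit_mult_card_change case_prod_unfold sum.distrib sum_distrib_left)
  finally show ?thesis
    by (simp add: sum_card_change)
qed

lemma bd_drift_sign:
  "1 \<le> r \<Longrightarrow> 0 \<le> (\<Sum>(u, v)\<in>arcs. bd_weight S u * card_change S u v)"
  "r \<le> 1 \<Longrightarrow> (\<Sum>(u, v)\<in>arcs. bd_weight S u * card_change S u v) \<le> 0"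
proof -
  define q where "q = (\<Sum>(u, v)\<in>arcs. of_bool (u \<in> S \<and> v \<notin> S)) / (total_fit S * real d)"
  have "0 \<le> q"
    unfolding q_def using total_fit_pos[of S] by (intro divide_nonneg_nonneg sum_nonneg) auto
  then show "1 \<le> r \<Longrightarrow> 0 \<le> (\<Sum>(u, v)\<in>arcs. bd_weight S u * card_change S u v)"
    and "r \<le> 1 \<Longrightarrow> (\<Sum>(u, v)\<in>arcs. bd_weight S u * card_change S u v) \<le> 0"
    unfolding bd_drift_eq q_def[symmetric] by (auto intro: mult_nonneg_nonneg mult_nonpos_nonneg)
qed

lemma db_drift_eq:
  "(\<Sum>(u, v)\<in>arcs. db_weight S u v * card_change S u v)
     = (\<Sum>v\<in>V. (\<Sum>u\<in>nbrs V E v. fit r S u * card_change S u v) / nbr_fit S v) / real (card V)"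
  unfolding sum_arcs_by_target sum_divide_distrib db_weight_def
  by (simp add: sum_divide_distrib ac_simps)

lemma sum_card_change_over_degree: "(\<Sum>v\<in>V. (\<Sum>u\<in>nbrs V E v. card_change S u v) / real d) = 0"
  using sum_card_change[of S] by (simp flip: sum_divide_distrib sum_arcs_by_target)

text \<open>The death-Birth drift is compared vertex by vertex with its neutral value, whose total
  vanishes by sum_card_change_over_degree.\<close>

lemma db_vertex_drift_ge:
  assumes "1 \<le> r" "v \<in> V"
  shows "(\<Sum>u\<in>nbrs V E v. card_change S u v) / real d
    \<le> (\<Sum>u\<in>nbrs V E v. fit r S u * card_change S u v) / nbr_fit S v"
proof (cases "v \<in> S")
  case True
  have "real d \<le> nbr_fit S v"
    using nbr_fit_bounds(1)[of v S] degree[OF assms(2)] assms(1) by simp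
  then show ?thesis
    using True degree_pos nbr_fit_pos[OF assms(2), of S]
    by (auto simp: fit_mult_card_change_at_target card_change_sign
        intro!: divide_left_mono_neg sum_nonpos)
next
  case False
  have "nbr_fit S v \<le> r * real d"
    using nbr_fit_bounds(2)[of S v] degree[OF assms(2)] assms(1) by (simp add: ac_simps)
  then have "r * (\<Sum>u\<in>nbrs V E v. card_change S u v) / (r * real d)
      \<le> r * (\<Sum>u\<in>nbrs V E v. card_change S u v) / nbr_fit S v"
    using False r_pos degree_pos nbr_fit_pos[OF assms(2), of S]
    by (intro divide_left_mono mult_nonneg_nonneg sum_nonneg) (auto simp: card_change_sign)
  then show ?thesis
    using False r_pos by (simp add: fit_mult_card_change_at_target flip: sum_distrib_left)
qed

lemma db_vertex_drift_le:
  assumes "r \<le> 1" "v \<in> V"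
  shows "(\<Sum>u\<in>nbrs V E v. fit r S u * card_change S u v) / nbr_fit S v
    \<le> (\<Sum>u\<in>nbrs V E v. card_change S u v) / real d"
proof (cases "v \<in> S")
  case True
  have "nbr_fit S v \<le> real d"
    using nbr_fit_bounds(2)[of S v] degree[OF assms(2)] assms(1) by simp
  then show ?thesis
    using True degree_pos nbr_fit_pos[OF assms(2), of S]
    by (auto simp: fit_mult_card_change_at_target card_change_sign
        intro!: divide_left_mono_neg sum_nonpos)
next
  case False
  have "r * real d \<le> nbr_fit S v"
    using nbr_fit_bounds(1)[of v S] degree[OF assms(2)] assms(1) by (simp add: ac_simps)
  then have "r * (\<Sum>u\<in>nbrs V E v. card_change S u v) / nbr_fit S v
      \<le> r * (\<Sum>u\<in>nbrs V E v. card_change S u v) / (r * real d)"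
    using False r_pos degree_pos nbr_fit_pos[OF assms(2), of S]
    by (intro divide_left_mono mult_nonneg_nonneg sum_nonneg) (auto simp: card_change_sign)
  then show ?thesis
    using False r_pos by (simp add: fit_mult_card_change_at_target flip: sum_distrib_left)
qed

lemma db_drift_sign:
  "1 \<le> r \<Longrightarrow> 0 \<le> (\<Sum>(u, v)\<in>arcs. db_weight S u v * card_change S u v)"
  "r \<le> 1 \<Longrightarrow> (\<Sum>(u, v)\<in>arcs. db_weight S u v * card_change S u v) \<le> 0"
proof -
  let ?F = "\<lambda>v. (\<Sum>u\<in>nbrs V E v. fit r S u * card_change S u v) / nbr_fit S v"
  let ?N = "\<lambda>v. (\<Sum>u\<in>nbrs V E v. card_change S u v) / real d"
  show "0 \<le> (\<Sum>(u, v)\<in>arcs. db_weight S u v * card_change S u v)" if "1 \<le> r"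
  proof -
    have "0 \<le> (\<Sum>v\<in>V. ?F v)"
      using sum_mono[of V ?N ?F] db_vertex_drift_ge[OF that] sum_card_change_over_degree[of S] by simp
    then show ?thesis
      unfolding db_drift_eq by simp
  qed
  show "(\<Sum>(u, v)\<in>arcs. db_weight S u v * card_change S u v) \<le> 0" if "r \<le> 1"
  proof -
    have "(\<Sum>v\<in>V. ?F v) \<le> 0"
      using sum_mono[of V ?F ?N] db_vertex_drift_le[OF that] sum_card_change_over_degree[of S] by simp
    then show ?thesis
      unfolding db_drift_eq by (simp add: divide_nonpos_nonneg)
  qed
qed

lemma drift_sign:
  "1 \<le> r \<Longrightarrow> 0 \<le> drift S"
  "r \<le> 1 \<Longrightarrow> drift S \<le> 0"
  unfolding drift_eq using bd_drift_sign db_drift_sign lam_nonneg lam_le_one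
  by (auto intro!: add_nonneg_nonneg add_nonpos_nonpos mult_nonneg_nonneg mult_nonneg_nonpos)

text \<open>The pivot is chosen so that |S| - pivot has the sign of the drift of |S|.\<close>
definition "pivot = (if 1 \<le> r then 0 else real (card V))"
definition "potential S = (real (card S) - pivot)\<^sup>2"

lemma potential_le: "S \<subseteq> V \<Longrightarrow> potential S \<le> real (card V) ^ 2"
  using card_mono[OF finite_V]
  by (fastforce simp: potential_def pivot_def abs_le_square_iff[symmetric] intro: power_mono)

lemma step_mean_potential:
  assumes "S \<subseteq> V"
  shows "potential S + min_weight * of_bool (S \<noteq> {} \<and> S \<noteq> V) \<le> step_mean S potential"
proof -
  let ?k = "2 * (real (card S) - pivot)"
  let ?sq = "\<Sum>(u, v)\<in>arcs. step_weight S u v * (card_change S u v)\<^sup>2"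
  have "finite S"
    using assms finite_V finite_subset by blast
  then have "step_weight S u v * potential (take_type S u v)
      = potential S * step_weight S u v + ?k * (step_weight S u v * card_change S u v)
        + step_weight S u v * (card_change S u v)\<^sup>2" for u v
    by (simp add: potential_def card_take_type power2_eq_square algebra_simps)
  then have mean: "step_mean S potential = potential S + ?k * drift S + ?sq"
    using sum_step_weight[of S]
    by (simp add: step_mean_def drift_def case_prod_unfold sum.distrib flip: sum_distrib_left)
  have "0 \<le> ?k * drift S"
  proof (cases "1 \<le> r")
    case True
    then show ?thesis
      using drift_sign(1) by (simp add: pivot_def)
  next
    case False
    then have "real (card S) - pivot \<le> 0"
      using card_mono[OF finite_V assms] by (simp add: pivot_def)
    then show ?thesis
      using False drift_sign(2)[of S] by (simp add: mult_nonpos_nonpos)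
  qed
  moreover have "min_weight * of_bool (S \<noteq> {} \<and> S \<noteq> V) \<le> ?sq"
    using sum_step_weight_card_change_sq[OF assms] step_weight_nonneg
    by (auto intro: sum_nonneg)
  ultimately show ?thesis
    unfolding mean by linarith
qed

context
  fixes S0 assumes initial: "S0 \<subseteq> V"
begin

lemma expect_potential_step:
  "expect S0 t potential + min_weight * prob_unabsorbed S0 t \<le> expect S0 (Suc t) potential"
proof -
  have "expect S0 t potential + min_weight * prob_unabsorbed S0 t
      = expect S0 t (\<lambda>S. potential S + min_weight * of_bool (S \<noteq> {} \<and> S \<noteq> V))"
    by (simp add: initial prob_unabsorbed_def expect_add expect_cmult)
  also have "\<dots> \<le> expect S0 (Suc t) potential"
    unfolding expect_Suc[OF initial] by (intro expect_mono initial step_mean_potential)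
  finally show ?thesis .
qed

lemma sum_prob_unabsorbed_le:
  "(\<Sum>t<k. prob_unabsorbed S0 t) \<le> max r 1 / min r 1 * real (card V) ^ 4"
proof -
  have "0 \<le> expect S0 t potential" for t
    by (rule expect_nonneg[OF initial]) (simp add: potential_def)
  moreover have "expect S0 t potential \<le> real (card V) ^ 2" for t
    using expect_mono[OF initial, of potential "\<lambda>_. real (card V) ^ 2" t] potential_le
    by (simp add: expect_const[OF initial])
  ultimately have "(\<Sum>t<k. prob_unabsorbed S0 t) \<le> real (card V) ^ 2 / min_weight"
    using expect_potential_step min_weight_pos by (intro sum_le_of_potential_increments)
  also have "\<dots> = max r 1 / min r 1 * real (card V) ^ 4"
    by (simp add: min_weight_def divide_divide_eq_right power_add[symmetric] mult_ac)
  finally show ?thesis .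
qed

lemma absorption_time_le:
  "absorption_time V E lam r S0 \<le> ennreal (max r 1 / min r 1 * real (card V) ^ 4)"
  unfolding absorption_time_eq[OF initial]
  using prob_unabsorbed_nonneg[OF initial] sum_prob_unabsorbed_le
  by (rule suminf_ennreal_le_of_partial_sums(2))

lemma prob_unabsorbed_tendsto_0: "prob_unabsorbed S0 \<longlonglongrightarrow> 0"
  using prob_unabsorbed_nonneg[OF initial] sum_prob_unabsorbed_le
  by (intro summable_LIMSEQ_zero suminf_ennreal_le_of_partial_sums(1))

context
  assumes neutral: "r = 1"
begin

lemma expect_card: "expect S0 t (\<lambda>T. real (card T)) = real (card S0)"
proof (induction t)
  case (Suc t)
  have "drift S = 0" for S
    using drift_sign neutral by (simp add: order.antisym)
  then have "expect S0 (Suc t) (\<lambda>T. real (card T)) = expect S0 t (\<lambda>T. real (card T))"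
    unfolding expect_Suc[OF initial] by (intro expect_cong[OF initial]) (simp add: step_mean_card)
  then show ?case
    using Suc by simp
qed (simp add: expect_0[OF initial])

lemma fixation_gap_bounds:
  "0 \<le> real (card S0) - real (card V) * moran_dist V E lam r S0 t V"
  "real (card S0) - real (card V) * moran_dist V E lam r S0 t V \<le> real (card V) * prob_unabsorbed S0 t"
proof -
  have eq: "real (card S0) - real (card V) * moran_dist V E lam r S0 t V
      = expect S0 t (\<lambda>T. real (card T) - real (card V) * of_bool (T = V))"
    by (simp add: initial expect_diff expect_cmult expect_indicator expect_card)
  show "0 \<le> real (card S0) - real (card V) * moran_dist V E lam r S0 t V"
    unfolding eq by (rule expect_nonneg[OF initial]) auto
  show "real (card S0) - real (card V) * moran_dist V E lam r S0 t V \<le> real (card V) * prob_unabsorbed S0 t"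
    unfolding eq prob_unabsorbed_def[OF initial] expect_cmult[OF initial, symmetric]
    using card_mono[OF finite_V] by (intro expect_mono[OF initial]) auto
qed

lemma fix_prob_neutral: "fix_prob V E lam r S0 = real (card S0) / real (card V)"
proof -
  let ?gap = "\<lambda>t. real (card S0) - real (card V) * moran_dist V E lam r S0 t V"
  have "?gap \<longlonglongrightarrow> 0"
    by (rule tendsto_sandwich[of "\<lambda>_. 0" _ _ "\<lambda>t. real (card V) * prob_unabsorbed S0 t"])
      (use fixation_gap_bounds tendsto_mult_right_zero[OF prob_unabsorbed_tendsto_0] in auto)
  then have "(\<lambda>t. (real (card S0) - ?gap t) / real (card V)) \<longlonglongrightarrow> (real (card S0) - 0) / real (card V)"
    using two_vertices by (intro tendsto_divide tendsto_diff tendsto_const) auto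
  then have "(\<lambda>t. moran_dist V E lam r S0 t V) \<longlonglongrightarrow> real (card S0) / real (card V)"
    using two_vertices by simp
  then show ?thesis
    unfolding fix_prob_def by (rule limI)
qed

end

end

end

lemma regular_moran_processI:
  assumes "simple_graph V E" "graph_connected V E" "graph_regular V E" "2 \<le> card V"
    "0 \<le> lam" "lam \<le> 1" "0 < r"
  obtains d where "regular_moran_process V E lam r d"
proof -
  obtain d where "\<forall>v\<in>V. card (nbrs V E v) = d"
    using assms(3) by (auto simp: graph_regular_def)
  then show ?thesis
    using assms by (intro that[of d]) (unfold_locales, auto)
qed

theorem mainTheorem7:
  shows "(\<forall>(V::nat set) E lam S0.
            simple_graph V E \<and> graph_connected V E \<and> graph_regular V E \<and> card V \<ge> 2
            \<and> 0 \<le> lam \<and> lam \<le> 1 \<and> S0 \<subseteq> V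
            \<longrightarrow> fix_prob V E lam 1 S0 = real (card S0) / real (card V))
       \<and> (\<forall>r::real. r > 0 \<longrightarrow> (\<exists>C::real. \<forall>(V::nat set) E lam S0.
            simple_graph V E \<and> graph_connected V E \<and> graph_regular V E \<and> card V \<ge> 2
            \<and> 0 \<le> lam \<and> lam \<le> 1 \<and> S0 \<subseteq> V
            \<longrightarrow> absorption_time V E lam r S0 \<le> ennreal (C * real (card V) ^ 4)))"
proof (intro conjI allI impI)
  fix V :: "nat set" and E and lam :: real and S0
  assume "simple_graph V E \<and> graph_connected V E \<and> graph_regular V E \<and> card V \<ge> 2
    \<and> 0 \<le> lam \<and> lam \<le> 1 \<and> S0 \<subseteq> V"
  moreover from this obtain d where "regular_moran_process V E lam 1 d"
    by (elim conjE regular_moran_processI) auto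
  ultimately show "fix_prob V E lam 1 S0 = real (card S0) / real (card V)"
    by (simp add: regular_moran_process.fix_prob_neutral)
next
  fix r :: real
  assume "r > 0"
  show "\<exists>C. \<forall>(V::nat set) E lam S0.
    simple_graph V E \<and> graph_connected V E \<and> graph_regular V E \<and> card V \<ge> 2
    \<and> 0 \<le> lam \<and> lam \<le> 1 \<and> S0 \<subseteq> V
    \<longrightarrow> absorption_time V E lam r S0 \<le> ennreal (C * real (card V) ^ 4)"
  proof (intro exI allI impI)
    fix V :: "nat set" and E and lam :: real and S0
    assume "simple_graph V E \<and> graph_connected V E \<and> graph_regular V E \<and> card V \<ge> 2
      \<and> 0 \<le> lam \<and> lam \<le> 1 \<and> S0 \<subseteq> V"
    moreover from this obtain d where "regular_moran_process V E lam r d"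
      using \<open>r > 0\<close> by (elim conjE regular_moran_processI) auto
    ultimately show "absorption_time V E lam r S0 \<le> ennreal (max r 1 / min r 1 * real (card V) ^ 4)"
      by (blast intro: regular_moran_process.absorption_time_le)
  qed
qed

end
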